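(* In the setting described in the context, for every $t\ge0$ the long exponential rate satisfies $R_{t\infty}\ge0$.
   Context: Let $(\Omega,\mathcal F,\mathbb P)$ be a probability space with a filtration $\{\mathcal F_t\}_{t\ge0}$ satisfying the usual conditions; (in)equalities between random variables hold a.s. A pricing kernel is an $\{\mathcal F_t\}$-adapted càdlàg semimartingale $\{\pi_t\}_{t\ge0}$ with (a) $\pi_t>0$ for all $t\ge0$, (b) $\mathbb E[\pi_t]<\infty$ for all $t\ge0$, (c) $\liminf_{t\to\infty}\mathbb E[\pi_t]=0$. Fix such a pricing kernel. The discount bond price is $P_{tT}=\pi_t^{-1}\mathbb E[\pi_T\mid\mathcal F_t]$ for $0\le t<T$. The exponential rate is $R_{tT}=-(T-t)^{-1}\ln P_{tT}$. For a family $\{A_x\}_{x\in\mathbb R^+}$ of $\mathcal F_t$-measurable extended-real random variables, $\limsup_{x\to\infty}A_x:=\operatorname{ess\,inf}_{x}\operatorname{ess\,sup}_{y\ge x}A_y$ and $\liminf_{x\to\infty}A_x:=\operatorname{ess\,sup}_{x}\operatorname{ess\,inf}_{y\ge x}A_y$, where essential supremum/infimum are taken among $\mathcal F_t$-measurable random variables (the essential supremum of a family being the a.s.-smallest random variable dominating every member a.s.). The long exponential rate is $R_{t\infty}=\limsup_{T\to\infty}R_{tT}$. *)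

theory Defs
  imports "HOL-Probability.Probability"
begin

(* Time index: nonnegative reals, represented as real with explicit guards t >= 0. *)

definition usual_filtration :: "'a measure \<Rightarrow> (real \<Rightarrow> 'a measure) \<Rightarrow> bool" where
  "usual_filtration M F \<longleftrightarrow>
     (\<forall>t\<ge>0. subalgebra M (F t)) \<and>
     (\<forall>s t. 0 \<le> s \<and> s \<le> t \<longrightarrow> sets (F s) \<subseteq> sets (F t)) \<and>
     complete_measure M \<and>
     null_sets M \<subseteq> sets (F 0) \<and>
     (\<forall>t\<ge>0. sets (F t) = (\<Inter>s\<in>{t<..}. sets (F s)))"

definition adapted :: "(real \<Rightarrow> 'a measure) \<Rightarrow> (real \<Rightarrow> 'a \<Rightarrow> real) \<Rightarrow> bool" where
  "adapted F X \<longleftrightarrow> (\<forall>t\<ge>0. X t \<in> borel_measurable (F t))"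

definition cadlag :: "'a measure \<Rightarrow> (real \<Rightarrow> 'a \<Rightarrow> real) \<Rightarrow> bool" where
  "cadlag M X \<longleftrightarrow> (\<forall>\<omega>\<in>space M.
     (\<forall>t\<ge>0. continuous (at_right t) (\<lambda>s. X s \<omega>)) \<and>
     (\<forall>t>0. \<exists>l. ((\<lambda>s. X s \<omega>) \<longlongrightarrow> l) (at_left t)))"

definition martingale :: "'a measure \<Rightarrow> (real \<Rightarrow> 'a measure) \<Rightarrow> (real \<Rightarrow> 'a \<Rightarrow> real) \<Rightarrow> bool" where
  "martingale M F X \<longleftrightarrow> adapted F X \<and> (\<forall>t\<ge>0. integrable M (X t)) \<and>
     (\<forall>s t. 0 \<le> s \<and> s \<le> t \<longrightarrow> (AE \<omega> in M. real_cond_exp M (F s) (X t) \<omega> = X s \<omega>))"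

definition stopping_time_pos :: "'a measure \<Rightarrow> (real \<Rightarrow> 'a measure) \<Rightarrow> ('a \<Rightarrow> ereal) \<Rightarrow> bool" where
  "stopping_time_pos M F \<tau> \<longleftrightarrow> (\<forall>\<omega>\<in>space M. 0 \<le> \<tau> \<omega>) \<and>
     (\<forall>t\<ge>0. {\<omega>\<in>space M. \<tau> \<omega> \<le> ereal t} \<in> sets (F t))"

definition stopped :: "(real \<Rightarrow> 'a \<Rightarrow> real) \<Rightarrow> ('a \<Rightarrow> ereal) \<Rightarrow> real \<Rightarrow> 'a \<Rightarrow> real" where
  "stopped X \<tau> t \<omega> = X (real_of_ereal (min (ereal t) (\<tau> \<omega>))) \<omega>"

definition local_martingale :: "'a measure \<Rightarrow> (real \<Rightarrow> 'a measure) \<Rightarrow> (real \<Rightarrow> 'a \<Rightarrow> real) \<Rightarrow> bool" where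
  "local_martingale M F X \<longleftrightarrow> adapted F X \<and>
     (\<exists>\<tau> :: nat \<Rightarrow> 'a \<Rightarrow> ereal.
        (\<forall>n. stopping_time_pos M F (\<tau> n)) \<and>
        (\<forall>n. \<forall>\<omega>\<in>space M. \<tau> n \<omega> \<le> \<tau> (Suc n) \<omega>) \<and>
        (AE \<omega> in M. (\<lambda>n. \<tau> n \<omega>) \<longlonglongrightarrow> \<infinity>) \<and>
        (\<forall>n. martingale M F (stopped X (\<tau> n))))"

definition finite_variation_on :: "(real \<Rightarrow> real) \<Rightarrow> real \<Rightarrow> real \<Rightarrow> bool" where
  "finite_variation_on f a b \<longleftrightarrow> (\<exists>B. \<forall>xs. sorted xs \<and> set xs \<subseteq> {a..b} \<longrightarrow>
     (\<Sum>i<length xs - 1. \<bar>f (xs ! Suc i) - f (xs ! i)\<bar>) \<le> B)"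

definition semimartingale :: "'a measure \<Rightarrow> (real \<Rightarrow> 'a measure) \<Rightarrow> (real \<Rightarrow> 'a \<Rightarrow> real) \<Rightarrow> bool" where
  "semimartingale M F X \<longleftrightarrow> adapted F X \<and> cadlag M X \<and>
     (\<exists>N A. local_martingale M F N \<and> cadlag M N \<and> (\<forall>\<omega>\<in>space M. N 0 \<omega> = 0) \<and>
        adapted F A \<and> cadlag M A \<and> (\<forall>\<omega>\<in>space M. A 0 \<omega> = 0) \<and>
        (\<forall>\<omega>\<in>space M. \<forall>t\<ge>0. finite_variation_on (\<lambda>s. A s \<omega>) 0 t) \<and>
        (AE \<omega> in M. \<forall>t\<ge>0. X t \<omega> = X 0 \<omega> + N t \<omega> + A t \<omega>))"

definition pricing_kernel :: "'a measure \<Rightarrow> (real \<Rightarrow> 'a measure) \<Rightarrow> (real \<Rightarrow> 'a \<Rightarrow> real) \<Rightarrow> bool" where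
  "pricing_kernel M F \<pi> \<longleftrightarrow> semimartingale M F \<pi> \<and>
     (\<forall>t\<ge>0. AE \<omega> in M. 0 < \<pi> t \<omega>) \<and>
     (\<forall>t\<ge>0. integrable M (\<pi> t)) \<and>
     Liminf at_top (\<lambda>t. ereal (integral\<^sup>L M (\<pi> t))) = 0"

definition is_ess_sup :: "'a measure \<Rightarrow> 'a measure \<Rightarrow> ('i \<Rightarrow> 'a \<Rightarrow> ereal) \<Rightarrow> 'i set \<Rightarrow> ('a \<Rightarrow> ereal) \<Rightarrow> bool" where
  "is_ess_sup M G A I Z \<longleftrightarrow> Z \<in> borel_measurable G \<and>
     (\<forall>x\<in>I. AE \<omega> in M. A x \<omega> \<le> Z \<omega>) \<and>
     (\<forall>W \<in> borel_measurable G. (\<forall>x\<in>I. AE \<omega> in M. A x \<omega> \<le> W \<omega>) \<longrightarrow> (AE \<omega> in M. Z \<omega> \<le> W \<omega>))"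

definition is_ess_inf :: "'a measure \<Rightarrow> 'a measure \<Rightarrow> ('i \<Rightarrow> 'a \<Rightarrow> ereal) \<Rightarrow> 'i set \<Rightarrow> ('a \<Rightarrow> ereal) \<Rightarrow> bool" where
  "is_ess_inf M G A I Z \<longleftrightarrow> Z \<in> borel_measurable G \<and>
     (\<forall>x\<in>I. AE \<omega> in M. Z \<omega> \<le> A x \<omega>) \<and>
     (\<forall>W \<in> borel_measurable G. (\<forall>x\<in>I. AE \<omega> in M. W \<omega> \<le> A x \<omega>) \<longrightarrow> (AE \<omega> in M. W \<omega> \<le> Z \<omega>))"

definition ess_sup_G :: "'a measure \<Rightarrow> 'a measure \<Rightarrow> ('i \<Rightarrow> 'a \<Rightarrow> ereal) \<Rightarrow> 'i set \<Rightarrow> 'a \<Rightarrow> ereal" where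
  "ess_sup_G M G A I = (SOME Z. is_ess_sup M G A I Z)"

definition ess_inf_G :: "'a measure \<Rightarrow> 'a measure \<Rightarrow> ('i \<Rightarrow> 'a \<Rightarrow> ereal) \<Rightarrow> 'i set \<Rightarrow> 'a \<Rightarrow> ereal" where
  "ess_inf_G M G A I = (SOME Z. is_ess_inf M G A I Z)"

definition ess_limsup :: "'a measure \<Rightarrow> 'a measure \<Rightarrow> (real \<Rightarrow> 'a \<Rightarrow> ereal) \<Rightarrow> real set \<Rightarrow> 'a \<Rightarrow> ereal" where
  "ess_limsup M G A I = ess_inf_G M G (\<lambda>x. ess_sup_G M G A {y\<in>I. x \<le> y}) I"

definition bond_price :: "'a measure \<Rightarrow> (real \<Rightarrow> 'a measure) \<Rightarrow> (real \<Rightarrow> 'a \<Rightarrow> real) \<Rightarrow> real \<Rightarrow> real \<Rightarrow> 'a \<Rightarrow> real" where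
  "bond_price M F \<pi> t T \<omega> = real_cond_exp M (F t) (\<pi> T) \<omega> / \<pi> t \<omega>"

definition exp_rate :: "'a measure \<Rightarrow> (real \<Rightarrow> 'a measure) \<Rightarrow> (real \<Rightarrow> 'a \<Rightarrow> real) \<Rightarrow> real \<Rightarrow> real \<Rightarrow> 'a \<Rightarrow> ereal" where
  "exp_rate M F \<pi> t T \<omega> = ereal (- ln (bond_price M F \<pi> t T \<omega>) / (T - t))"

definition long_rate :: "'a measure \<Rightarrow> (real \<Rightarrow> 'a measure) \<Rightarrow> (real \<Rightarrow> 'a \<Rightarrow> real) \<Rightarrow> real \<Rightarrow> 'a \<Rightarrow> ereal" where
  "long_rate M F \<pi> t = ess_limsup M (F t) (exp_rate M F \<pi> t) {t<..}"

end

theory Submission imports Defs begin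

(* Since liminf E[pi_T] = 0, there are times T_n -> oo with E[pi_{T_n}] < 2^-n. The conditional
   expectations E[pi_{T_n} | F_t] then have summable expectations, so they tend to 0 almost surely;
   hence the bond prices P_{t T_n} eventually lie in (0,1), i.e. R_{t T_n} > 0 for all large n, a.s.
   Each essential supremum over {y >= x} dominates these R_{t T_n}, so it is a.s. nonnegative, and
   so is their essential infimum.

   The essential suprema exist because an extended-real family is a.s. dominated by its supremum
   over a suitable countable subfamily: take one maximising the expectation of a bounded strictly
   increasing transform (arctan) of the countable supremum. *)

definition ereal_arctan :: "ereal \<Rightarrow> real" where
  "ereal_arctan x = (if x = \<infinity> then 2 else if x = -\<infinity> then -2 else arctan (real_of_ereal x))"

lemma arctan_bounds_2: "-2 < arctan x" "arctan x < 2"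
  using arctan_bounded[of x] pi_less_4 by linarith+

lemma strict_mono_ereal_arctan: "strict_mono ereal_arctan"
proof
  fix a b :: ereal assume "a < b"
  then show "ereal_arctan a < ereal_arctan b"
    using arctan_bounds_2 by (cases a; cases b) (auto simp: ereal_arctan_def arctan_less_iff)
qed

lemma abs_ereal_arctan_le: "\<bar>ereal_arctan x\<bar> \<le> 2"
  using arctan_bounds_2[of "real_of_ereal x"] by (auto simp: ereal_arctan_def)

lemma borel_measurable_ereal_arctan [measurable]: "ereal_arctan \<in> borel_measurable borel"
  unfolding ereal_arctan_def by measurable

lemma countable_maximizerE:
  fixes \<Phi> :: "'i set \<Rightarrow> real"
  assumes bounded: "\<And>C. countable C \<Longrightarrow> C \<subseteq> I \<Longrightarrow> \<Phi> C \<le> B"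
    and mono: "\<And>C D. C \<subseteq> D \<Longrightarrow> countable D \<Longrightarrow> D \<subseteq> I \<Longrightarrow> \<Phi> C \<le> \<Phi> D"
  obtains C where "countable C" "C \<subseteq> I" "\<And>D. countable D \<Longrightarrow> D \<subseteq> I \<Longrightarrow> \<Phi> D \<le> \<Phi> C"
proof -
  define CC where "CC = {C. countable C \<and> C \<subseteq> I}"
  define s where "s = (SUP C\<in>CC. \<Phi> C)"
  have ne: "CC \<noteq> {}" unfolding CC_def by blast
  have bdd: "bdd_above (\<Phi> ` CC)" using bounded unfolding CC_def by (auto intro: bdd_aboveI[where M=B])
  have "\<exists>C\<in>CC. s - 1 / real (Suc n) < \<Phi> C" for n
  proof -
    have "s - 1 / real (Suc n) < s" by simp
    then show ?thesis unfolding s_def less_cSUP_iff[OF ne bdd] .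
  qed
  then obtain Cn where Cn: "\<And>n. Cn n \<in> CC" "\<And>n. s - 1 / real (Suc n) < \<Phi> (Cn n)"
    by metis
  define C where "C = (\<Union>n. Cn n)"
  have C: "countable C" "C \<subseteq> I" using Cn(1) unfolding CC_def C_def by auto
  have approx: "s - 1 / real (Suc n) < \<Phi> C" for n
    using Cn(2)[of n] mono[of "Cn n" C] C unfolding C_def by fastforce
  have "s \<le> \<Phi> C"
  proof (rule field_le_epsilon)
    fix e :: real assume "0 < e"
    then obtain n where "1 / real (Suc n) < e" by (rule nat_approx_posE)
    with approx[of n] show "s \<le> \<Phi> C + e" by linarith
  qed
  moreover have "\<Phi> D \<le> s" if "countable D" "D \<subseteq> I" for D
    unfolding s_def using that bdd by (intro cSUP_upper) (auto simp: CC_def)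
  ultimately show ?thesis using that C by fastforce
qed

lemma AE_le_countable_SUPE:
  fixes A :: "'i \<Rightarrow> 'a \<Rightarrow> ereal"
  assumes "finite_measure M" and meas: "\<And>x. x \<in> I \<Longrightarrow> A x \<in> borel_measurable M"
  obtains C where "countable C" "C \<subseteq> I" "\<And>x. x \<in> I \<Longrightarrow> AE \<omega> in M. A x \<omega> \<le> (SUP c\<in>C. A c \<omega>)"
proof -
  interpret finite_measure M by fact
  define \<Phi> where "\<Phi> C = (\<integral>\<omega>. ereal_arctan (SUP c\<in>C. A c \<omega>) \<partial>M)" for C
  have intg: "integrable M (\<lambda>\<omega>. ereal_arctan (SUP c\<in>C. A c \<omega>))" if "countable C" "C \<subseteq> I" for C
    using that meas abs_ereal_arctan_le
    by (intro integrable_const_bound[where B=2] AE_I2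
        measurable_compose[OF borel_measurable_SUP borel_measurable_ereal_arctan]) auto
  have mono: "\<Phi> C \<le> \<Phi> D" if "C \<subseteq> D" "countable D" "D \<subseteq> I" for C D
    unfolding \<Phi>_def using that countable_subset[OF that(1,2)] strict_mono_mono[OF strict_mono_ereal_arctan]
    by (intro integral_mono intg) (auto intro: monoD SUP_subset_mono)
  have bounded: "\<Phi> C \<le> (\<integral>\<omega>. 2 \<partial>M)" if "countable C" "C \<subseteq> I" for C
    unfolding \<Phi>_def using abs_ereal_arctan_le
    by (intro integral_mono intg[OF that]) (auto simp: abs_le_iff)
  obtain C where C: "countable C" "C \<subseteq> I" and max: "\<And>D. countable D \<Longrightarrow> D \<subseteq> I \<Longrightarrow> \<Phi> D \<le> \<Phi> C"
    using countable_maximizerE[of I \<Phi>, OF bounded mono] by blast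
  have "AE \<omega> in M. A x \<omega> \<le> (SUP c\<in>C. A c \<omega>)" if x: "x \<in> I" for x
  proof -
    let ?d = "\<lambda>\<omega>. ereal_arctan (SUP c\<in>insert x C. A c \<omega>) - ereal_arctan (SUP c\<in>C. A c \<omega>)"
    have D: "countable (insert x C)" "insert x C \<subseteq> I" using C x by auto
    have d_nonneg: "0 \<le> ?d \<omega>" for \<omega>
      using strict_mono_less_eq[OF strict_mono_ereal_arctan] by (simp add: SUP_subset_mono subset_insertI)
    have "(\<integral>\<omega>. ?d \<omega> \<partial>M) = \<Phi> (insert x C) - \<Phi> C"
      unfolding \<Phi>_def using intg[OF D] intg[OF C] by simp
    also have "\<dots> = 0" using max[OF D] mono[OF subset_insertI D] by simp
    finally have "AE \<omega> in M. ?d \<omega> = 0"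
      using integral_nonneg_eq_0_iff_AE[of M ?d] intg[OF D] intg[OF C] d_nonneg by simp
    then show ?thesis
    proof eventually_elim
      case (elim \<omega>)
      then have "(SUP c\<in>insert x C. A c \<omega>) = (SUP c\<in>C. A c \<omega>)"
        using strict_mono_eq[OF strict_mono_ereal_arctan] by simp
      then show ?case by (metis SUP_upper insertI1)
    qed
  qed
  with C that show ?thesis by blast
qed

lemma is_ess_sup_ess_sup_G:
  fixes A :: "'i \<Rightarrow> 'a \<Rightarrow> ereal"
  assumes "finite_measure M" and G: "subalgebra M G"
    and meas: "\<And>x. x \<in> I \<Longrightarrow> A x \<in> borel_measurable G"
  shows "is_ess_sup M G A I (ess_sup_G M G A I)"
proof -
  have "\<And>x. x \<in> I \<Longrightarrow> A x \<in> borel_measurable M"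
    using measurable_from_subalg[OF G meas] .
  then obtain C where C: "countable C" "C \<subseteq> I"
    and dom: "\<And>x. x \<in> I \<Longrightarrow> AE \<omega> in M. A x \<omega> \<le> (SUP c\<in>C. A c \<omega>)"
    using AE_le_countable_SUPE[OF assms(1)] by blast
  have "is_ess_sup M G A I (\<lambda>\<omega>. SUP c\<in>C. A c \<omega>)"
    unfolding is_ess_sup_def
  proof (intro conjI ballI impI)
    show "(\<lambda>\<omega>. SUP c\<in>C. A c \<omega>) \<in> borel_measurable G"
      using C meas by (intro borel_measurable_SUP) auto
  next
    fix x assume "x \<in> I"
    then show "AE \<omega> in M. A x \<omega> \<le> (SUP c\<in>C. A c \<omega>)" by (rule dom)
  next
    fix W assume "\<forall>x\<in>I. AE \<omega> in M. A x \<omega> \<le> W \<omega>"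
    then have "AE \<omega> in M. \<forall>c\<in>C. A c \<omega> \<le> W \<omega>"
      using C by (subst AE_ball_countable) auto
    then show "AE \<omega> in M. (SUP c\<in>C. A c \<omega>) \<le> W \<omega>"
      by eventually_elim (simp add: SUP_le_iff)
  qed
  then show ?thesis unfolding ess_sup_G_def by (rule someI[where P = "is_ess_sup M G A I"])
qed

lemma is_ess_inf_uminus:
  assumes "is_ess_sup M G (\<lambda>x \<omega>. - A x \<omega>) I Z"
  shows "is_ess_inf M G A I (\<lambda>\<omega>. - Z \<omega>)"
  unfolding is_ess_inf_def
proof (intro conjI ballI impI)
  show "(\<lambda>\<omega>. - Z \<omega>) \<in> borel_measurable G"
    using assms by (simp add: is_ess_sup_def)
next
  fix x assume "x \<in> I"
  then have "AE \<omega> in M. - A x \<omega> \<le> Z \<omega>" using assms by (simp add: is_ess_sup_def)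
  then show "AE \<omega> in M. - Z \<omega> \<le> A x \<omega>"
    by eventually_elim (erule ereal_uminus_le_reorder[THEN iffD1])
next
  fix W :: "'a \<Rightarrow> ereal"
  assume "W \<in> borel_measurable G" and "\<forall>x\<in>I. AE \<omega> in M. W \<omega> \<le> A x \<omega>"
  then have "(\<lambda>\<omega>. - W \<omega>) \<in> borel_measurable G" "\<forall>x\<in>I. AE \<omega> in M. - A x \<omega> \<le> - W \<omega>"
    by (simp_all only: borel_measurable_uminus_eq_ereal ereal_minus_le_minus)
  then have "AE \<omega> in M. Z \<omega> \<le> - W \<omega>"
    using assms unfolding is_ess_sup_def by simp
  then show "AE \<omega> in M. W \<omega> \<le> - Z \<omega>"
    by eventually_elim (metis ereal_minus_le_minus ereal_uminus_uminus)
qed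

lemma is_ess_inf_ess_inf_G:
  fixes A :: "'i \<Rightarrow> 'a \<Rightarrow> ereal"
  assumes "finite_measure M" and "subalgebra M G"
    and "\<And>x. x \<in> I \<Longrightarrow> A x \<in> borel_measurable G"
  shows "is_ess_inf M G A I (ess_inf_G M G A I)"
proof -
  have "is_ess_sup M G (\<lambda>x \<omega>. - A x \<omega>) I (ess_sup_G M G (\<lambda>x \<omega>. - A x \<omega>) I)"
    using assms by (intro is_ess_sup_ess_sup_G) simp_all
  then have "is_ess_inf M G A I (\<lambda>\<omega>. - ess_sup_G M G (\<lambda>x \<omega>. - A x \<omega>) I \<omega>)"
    by (rule is_ess_inf_uminus)
  then show ?thesis unfolding ess_inf_G_def by (rule someI[where P = "is_ess_inf M G A I"])
qed

lemma AE_ess_limsup_ge: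
  fixes A :: "real \<Rightarrow> 'a \<Rightarrow> ereal" and T :: "nat \<Rightarrow> real" and c :: ereal
  assumes "finite_measure M" and G: "subalgebra M G"
    and meas: "\<And>y. y \<in> I \<Longrightarrow> A y \<in> borel_measurable G"
    and T: "\<And>n. T n \<in> I" "filterlim T at_top sequentially"
    and ev: "AE \<omega> in M. eventually (\<lambda>n. c \<le> A (T n) \<omega>) sequentially"
  shows "AE \<omega> in M. c \<le> ess_limsup M G A I \<omega>"
proof -
  define S where "S x = ess_sup_G M G A {y\<in>I. x \<le> y}" for x
  have S: "is_ess_sup M G A {y\<in>I. x \<le> y} (S x)" for x
    unfolding S_def using assms(1) G meas by (intro is_ess_sup_ess_sup_G) auto
  have "is_ess_inf M G S I (ess_limsup M G A I)"
    unfolding ess_limsup_def S_def[symmetric] using assms(1) G S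
    by (intro is_ess_inf_ess_inf_G) (auto simp: is_ess_sup_def)
  moreover have "AE \<omega> in M. c \<le> S x \<omega>" for x
  proof -
    have "AE \<omega> in M. \<forall>n. x \<le> T n \<longrightarrow> A (T n) \<omega> \<le> S x \<omega>"
      using S[of x] T(1) by (auto simp: AE_all_countable is_ess_sup_def)
    with ev show ?thesis
    proof eventually_elim
      case (elim \<omega>)
      have "eventually (\<lambda>n. x \<le> T n \<and> c \<le> A (T n) \<omega>) sequentially"
        using filterlim_at_top[THEN iffD1, OF T(2)] elim(1) by (auto intro: eventually_conj)
      then obtain n where "x \<le> T n" "c \<le> A (T n) \<omega>"
        by (auto dest: eventually_happens)
      with elim(2) show ?case by (blast intro: order_trans)
    qed
  qed
  ultimately show ?thesis unfolding is_ess_inf_def by simp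
qed

lemma AE_tendsto_zero_of_summable_integrals:
  fixes X :: "nat \<Rightarrow> 'a \<Rightarrow> real"
  assumes intg: "\<And>n. integrable M (X n)" and nonneg: "\<And>n. AE \<omega> in M. 0 \<le> X n \<omega>"
    and summable: "summable (\<lambda>n. \<integral>\<omega>. X n \<omega> \<partial>M)"
  shows "AE \<omega> in M. (\<lambda>n. X n \<omega>) \<longlonglongrightarrow> 0"
proof -
  have [measurable]: "X n \<in> borel_measurable M" for n using intg by auto
  have "(\<integral>\<^sup>+\<omega>. (\<Sum>n. ennreal (X n \<omega>)) \<partial>M) = (\<Sum>n. \<integral>\<^sup>+\<omega>. ennreal (X n \<omega>) \<partial>M)"
    by (rule nn_integral_suminf) measurable
  also have "\<dots> = (\<Sum>n. ennreal (\<integral>\<omega>. X n \<omega> \<partial>M))"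
    using nn_integral_eq_integral[OF intg nonneg] by simp
  also have "\<dots> = ennreal (\<Sum>n. \<integral>\<omega>. X n \<omega> \<partial>M)"
    using summable nonneg by (intro suminf_ennreal2 integral_nonneg_AE)
  finally have "AE \<omega> in M. (\<Sum>n. ennreal (X n \<omega>)) \<noteq> \<infinity>"
    by (intro nn_integral_PInf_AE) auto
  moreover have "AE \<omega> in M. \<forall>n. 0 \<le> X n \<omega>"
    using nonneg by (simp add: AE_all_countable)
  ultimately show ?thesis
    by eventually_elim (auto intro: summable_LIMSEQ_zero summable_suminf_not_top)
qed

lemma Liminf_zero_fast_sequenceE:
  fixes f :: "real \<Rightarrow> real"
  assumes "Liminf at_top (\<lambda>s. ereal (f s)) = 0"
  obtains T :: "nat \<Rightarrow> real" where "\<And>n. a + real n \<le> T n" "\<And>n. f (T n) < (1/2)^n"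
proof -
  have "\<exists>T\<ge>x. f T < e" if "0 < e" for x e :: real
  proof (rule ccontr)
    assume "\<not> ?thesis"
    then have "eventually (\<lambda>T. ereal e \<le> ereal (f T)) at_top"
      by (auto simp: eventually_at_top_linorder not_less)
    then have "ereal e \<le> Liminf at_top (\<lambda>s. ereal (f s))"
      by (rule Liminf_bounded)
    with assms \<open>0 < e\<close> show False by simp
  qed
  then have "\<forall>n. \<exists>T. a + real n \<le> T \<and> f T < (1/2)^n"
    by simp
  then show ?thesis using that by metis
qed

lemma exp_rate_pos:
  assumes "0 < bond_price M F \<pi> t T \<omega>" "bond_price M F \<pi> t T \<omega> < 1" "t < T"
  shows "0 < exp_rate M F \<pi> t T \<omega>"
  using assms by (simp add: exp_rate_def divide_neg_pos)

lemma usual_filtration_sigma_finite_subalgebra: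
  assumes "prob_space M" "usual_filtration M F" "0 \<le> t"
  shows "sigma_finite_subalgebra M (F t)"
proof -
  interpret prob_space M by fact
  have "subalgebra M (F t)" using assms(2,3) unfolding usual_filtration_def by auto
  then show ?thesis
    by (intro finite_measure_subalgebra_is_sigma_finite)
      (simp add: finite_measure_subalgebra_def finite_measure_subalgebra_axioms_def finite_measure_axioms)
qed

lemma borel_measurable_exp_rate:
  assumes "prob_space M" "usual_filtration M F" "pricing_kernel M F \<pi>" "0 \<le> t"
  shows "exp_rate M F \<pi> t T \<in> borel_measurable (F t)"
proof -
  interpret sigma_finite_subalgebra M "F t"
    using assms(1,2,4) by (rule usual_filtration_sigma_finite_subalgebra)
  have [measurable]: "\<pi> t \<in> borel_measurable (F t)"
    using assms(3,4) unfolding pricing_kernel_def semimartingale_def adapted_def by auto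
  show ?thesis unfolding exp_rate_def bond_price_def by measurable
qed

lemma pricing_kernel_exp_rate_eventually_pos:
  assumes "prob_space M" "usual_filtration M F" "pricing_kernel M F \<pi>" "0 \<le> t"
    and T: "\<And>n. t < T n" and summable: "summable (\<lambda>n. \<integral>\<omega>. \<pi> (T n) \<omega> \<partial>M)"
  shows "AE \<omega> in M. eventually (\<lambda>n. 0 < exp_rate M F \<pi> t (T n) \<omega>) sequentially"
proof -
  interpret sigma_finite_subalgebra M "F t"
    using assms(1,2,4) by (rule usual_filtration_sigma_finite_subalgebra)
  have pos: "\<And>s. 0 \<le> s \<Longrightarrow> AE \<omega> in M. 0 < \<pi> s \<omega>"
    and intg: "\<And>s. 0 \<le> s \<Longrightarrow> integrable M (\<pi> s)"
    using assms(3) unfolding pricing_kernel_def by auto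
  have T0: "0 \<le> T n" for n using T[of n] assms(4) by linarith
  define P where "P n = real_cond_exp M (F t) (\<pi> (T n))" for n
  have P_pos: "AE \<omega> in M. 0 < P n \<omega>" for n
    unfolding P_def using intg[OF T0] pos[OF T0] by (rule real_cond_exp_gr_c)
  have "AE \<omega> in M. (\<lambda>n. P n \<omega>) \<longlonglongrightarrow> 0"
  proof (rule AE_tendsto_zero_of_summable_integrals)
    show "integrable M (P n)" for n unfolding P_def using intg[OF T0] by (rule real_cond_exp_int)
    show "AE \<omega> in M. 0 \<le> P n \<omega>" for n using P_pos[of n] by eventually_elim simp
    show "summable (\<lambda>n. \<integral>\<omega>. P n \<omega> \<partial>M)"
      unfolding P_def real_cond_exp_int(2)[OF intg[OF T0]] by (rule summable)
  qed
  moreover have "AE \<omega> in M. \<forall>n. 0 < P n \<omega>"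
    using P_pos by (simp add: AE_all_countable)
  ultimately show ?thesis using pos[OF assms(4)]
  proof eventually_elim
    case (elim \<omega>)
    have "0 < exp_rate M F \<pi> t (T n) \<omega>" if "P n \<omega> < \<pi> t \<omega>" for n
      using that elim T[of n] by (intro exp_rate_pos) (auto simp: bond_price_def P_def[symmetric])
    moreover have "eventually (\<lambda>n. P n \<omega> < \<pi> t \<omega>) sequentially"
      using elim by (intro order_tendstoD(2)) auto
    ultimately show ?case by (auto elim: eventually_mono)
  qed
qed

lemma pricing_kernel_summable_sequenceE:
  assumes "pricing_kernel M F \<pi>" "0 \<le> a"
  obtains T :: "nat \<Rightarrow> real"
  where "\<And>n. a < T n" "filterlim T at_top sequentially" "summable (\<lambda>n. \<integral>\<omega>. \<pi> (T n) \<omega> \<partial>M)"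
proof -
  have pos: "\<And>s. 0 \<le> s \<Longrightarrow> AE \<omega> in M. 0 < \<pi> s \<omega>"
    and liminf: "Liminf at_top (\<lambda>s. ereal (\<integral>\<omega>. \<pi> s \<omega> \<partial>M)) = 0"
    using assms(1) unfolding pricing_kernel_def by auto
  obtain T where T: "\<And>n. (a + 1) + real n \<le> T n" "\<And>n. (\<integral>\<omega>. \<pi> (T n) \<omega> \<partial>M) < (1/2)^n"
    using Liminf_zero_fast_sequenceE[OF liminf] by blast
  have "summable (\<lambda>n. \<integral>\<omega>. \<pi> (T n) \<omega> \<partial>M)"
  proof (rule summable_comparison_test'[OF summable_geometric[of "1/2"]])
    fix n
    have "0 \<le> (\<integral>\<omega>. \<pi> (T n) \<omega> \<partial>M)"
      using pos[of "T n"] T(1)[of n] assms(2) by (auto intro!: integral_nonneg_AE elim: eventually_mono)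
    with T(2)[of n] show "norm (\<integral>\<omega>. \<pi> (T n) \<omega> \<partial>M) \<le> (1/2)^n" by simp
  qed simp
  moreover have "filterlim T at_top sequentially"
  proof (rule filterlim_at_top_mono[OF filterlim_real_sequentially always_eventually])
    show "\<forall>n. real n \<le> T n"
    proof
      fix n show "real n \<le> T n" using T(1)[of n] assms(2) by linarith
    qed
  qed
  moreover have "a < T n" for n using T(1)[of n] by simp
  ultimately show ?thesis using that by blast
qed

theorem proposition1:
  fixes M :: "'a measure" and F :: "real \<Rightarrow> 'a measure" and \<pi> :: "real \<Rightarrow> 'a \<Rightarrow> real"
  assumes "prob_space M"
    and "usual_filtration M F"
    and "pricing_kernel M F \<pi>"
    and "0 \<le> t"
  shows "AE \<omega> in M. 0 \<le> long_rate M F \<pi> t \<omega>"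
proof -
  obtain T where T: "\<And>n. t < T n" "filterlim T at_top sequentially"
    and summable: "summable (\<lambda>n. \<integral>\<omega>. \<pi> (T n) \<omega> \<partial>M)"
    using pricing_kernel_summable_sequenceE[OF assms(3,4)] by blast
  have pos_eventually: "AE \<omega> in M. eventually (\<lambda>n. 0 < exp_rate M F \<pi> t (T n) \<omega>) sequentially"
    using assms T(1) summable by (rule pricing_kernel_exp_rate_eventually_pos)
  show ?thesis unfolding long_rate_def
  proof (rule AE_ess_limsup_ge[where T = T])
    show "finite_measure M" using assms(1) by (simp add: prob_space_def)
    show "subalgebra M (F t)" using assms(2,4) by (simp add: usual_filtration_def)
    show "exp_rate M F \<pi> t y \<in> borel_measurable (F t)" for y
      using assms by (rule borel_measurable_exp_rate)
    show "T n \<in> {t<..}" for n using T(1) by simp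
    show "AE \<omega> in M. eventually (\<lambda>n. 0 \<le> exp_rate M F \<pi> t (T n) \<omega>) sequentially"
      using pos_eventually by eventually_elim (auto elim: eventually_mono)
  qed (rule T(2))
qed

end
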